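(* Let $p,q$ be integers with $1+|p|<|q|$ and $\gcd(p,q)=1$, and assume $t(x)=x^2+px-q$ is irreducible in $\mathbb{Z}[x]$. Then for every nonzero $\gamma\in\mathbb{Z}^2$ the language $\psi_{p,q}^{-1}(\langle\gamma\rangle)$ is not regular.
   Context: For $f,g\in\mathbb{Z}[x]$ write $f\sim g$ if $t$ divides $f-g$; identify $\mathbb{Z}^2$ with the additive group of $\mathbb{Z}[x]/\langle t\rangle$ via $(h_1,h_2)\mapsto[h_1x+h_2]_\sim$. Let $\Sigma_q=\{-(|q|-1),\dots,|q|-1\}$ with the order $-(|q|-1)<\dots<|q|-1$; a string $a_0a_1\dots a_n\in\Sigma_q^*$ represents the polynomial $a_nx^n+\dots+a_1x+a_0$, and two strings are equivalent if their polynomials are $\sim$-equivalent. $\mathrm{Dom}_{p,q}$ is the set of $w\in\Sigma_q^*$ such that no string strictly smaller than $w$ in the length-lexicographic order on $\Sigma_q^*$ is equivalent to $w$, and $\psi_{p,q}:\mathrm{Dom}_{p,q}\to\mathbb{Z}^2$ sends $w$ to the $\sim$-class of the polynomial it represents. *)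

theory Defs
  imports "HOL-Computational_Algebra.Polynomial" "HOL-Computational_Algebra.Factorial_Ring"
begin

definition tpoly :: "int \<Rightarrow> int \<Rightarrow> int poly" where
  "tpoly p q = [:-q, p, 1:]"

definition tequiv :: "int \<Rightarrow> int \<Rightarrow> int poly \<Rightarrow> int poly \<Rightarrow> bool" where
  "tequiv p q f g \<longleftrightarrow> tpoly p q dvd (f - g)"

definition digits :: "int \<Rightarrow> int set" where
  "digits q = {-(\<bar>q\<bar> - 1) .. \<bar>q\<bar> - 1}"

text \<open>The string a0 a1 ... an represents an x^n + ... + a1 x + a0.\<close>
definition strpoly :: "int list \<Rightarrow> int poly" where
  "strpoly w = Poly w"

definition str_equiv :: "int \<Rightarrow> int \<Rightarrow> int list \<Rightarrow> int list \<Rightarrow> bool" where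
  "str_equiv p q v w \<longleftrightarrow> tequiv p q (strpoly v) (strpoly w)"

text \<open>Strict length-lexicographic order on strings (first letter a0 most significant
  among strings of equal length), letters ordered as integers.\<close>
definition llex_less :: "int list \<Rightarrow> int list \<Rightarrow> bool" where
  "llex_less v w \<longleftrightarrow> length v < length w \<or>
     (length v = length w \<and> (v, w) \<in> lexord {(a, b). a < b})"

definition Dom :: "int \<Rightarrow> int \<Rightarrow> int list set" where
  "Dom p q = {w \<in> lists (digits q).
      \<not> (\<exists>v \<in> lists (digits q). llex_less v w \<and> str_equiv p q v w)}"

text \<open>Identification of Z^2 with Z[x]/<t>: (h1,h2) corresponds to the class of h1 x + h2.\<close>
definition psi :: "int \<Rightarrow> int \<Rightarrow> int list \<Rightarrow> int \<times> int" where
  "psi p q w = (THE h. tequiv p q (strpoly w) [:snd h, fst h:])"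

definition cyclic_subgroup :: "int \<times> int \<Rightarrow> (int \<times> int) set" where
  "cyclic_subgroup g = {(k * fst g, k * snd g) | k. True}"

definition regular_lang :: "'a set \<Rightarrow> 'a list set \<Rightarrow> bool" where
  "regular_lang A L \<longleftrightarrow> L \<subseteq> lists A \<and>
     (\<exists>(Q :: nat set) s F (\<delta> :: nat \<Rightarrow> 'a \<Rightarrow> nat).
        finite Q \<and> s \<in> Q \<and> F \<subseteq> Q \<and>
        (\<forall>x \<in> Q. \<forall>a \<in> A. \<delta> x a \<in> Q) \<and>
        L = {w \<in> lists A. foldl \<delta> s w \<in> F})"

end

theory Submission
  imports Defs "HOL-Library.Product_Plus" "HOL-Library.Signed_Division"
begin

text \<open>Reading a string by Horner's rule, prepending a digit multiplies the value in
  \<open>\<int>[x]/\<langle>t\<rangle> \<cong> \<int>\<^sup>2\<close> by \<open>x\<close> and adds the digit. As \<open>|q| > 1 + |p|\<close>, every class has a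
  digit expansion, so \<open>Dom\<close> contains exactly one string per class and the language
  \<open>L = \<psi>\<^sup>-\<^sup>1\<langle>\<gamma>\<rangle>\<close> is infinite. If \<open>L\<close> were regular, pumping would give \<open>u v\<^sup>k z \<in> L\<close>
  for all \<open>k\<close>, and then \<open>\<psi>(u v\<^sup>2 z) - \<psi>(u v z) = x\<^sup>m (\<psi>(u v z) - \<psi>(u z))\<close> with \<open>m = |v| > 0\<close>.
  Both differences lie in \<open>\<langle>\<gamma>\<rangle>\<close> and the second is nonzero, so multiplication by \<open>x\<^sup>m\<close>
  would have an eigenvector. Writing \<open>x\<^sup>m \<equiv> c\<^sub>1 x + c\<^sub>0\<close>, irreducibility of \<open>t\<close> makes any
  nonzero \<open>R\<close> and \<open>x R\<close> independent, which forces \<open>c\<^sub>1 = 0\<close>; but \<open>c\<^sub>1 \<equiv> (-p)\<^sup>m\<^sup>-\<^sup>1\<close>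
  is a unit modulo \<open>q\<close>, as \<open>gcd p q = 1\<close> and \<open>|q| > 1\<close>.\<close>

text \<open>With \<open>(h1, h2)\<close> standing for \<open>h1 x + h2\<close>:
  \<open>x (h1 x + h2) = h1 x\<^sup>2 + h2 x \<equiv> (h2 - p h1) x + q h1\<close> modulo \<open>t\<close>.\<close>

definition mult_x :: "int \<Rightarrow> int \<Rightarrow> int \<times> int \<Rightarrow> int \<times> int" where
  "mult_x p q h = (snd h - p * fst h, q * fst h)"

fun str_val :: "int \<Rightarrow> int \<Rightarrow> int list \<Rightarrow> int \<times> int" where
  "str_val p q [] = 0"
| "str_val p q (a # w) = mult_x p q (str_val p q w) + (0, a)"

lemma additive_funpow:
  fixes f :: "'a::ab_group_add \<Rightarrow> 'a"
  assumes "additive f"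
  shows "additive (f ^^ n)"
  by (induction n) (simp_all add: additive_def additive.add[OF assms])

lemma additive_mult_x: "additive (mult_x p q)"
  by unfold_locales (simp add: mult_x_def algebra_simps)

lemma additive_mult_x_pow: "additive (mult_x p q ^^ n)"
  by (rule additive_funpow[OF additive_mult_x])

lemma str_val_append:
  "str_val p q (u @ w) = str_val p q u + (mult_x p q ^^ length u) (str_val p q w)"
  using additive.add[OF additive_mult_x] by (induction u) simp_all

lemma str_val_append_diff:
  "str_val p q (u @ v) - str_val p q (u @ w) =
     (mult_x p q ^^ length u) (str_val p q v - str_val p q w)"
  by (simp add: str_val_append additive.diff[OF additive_mult_x_pow])

lemma tequiv_str_val: "tequiv p q (strpoly w) [:snd (str_val p q w), fst (str_val p q w):]"
proof (induction w)
  case Nil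
  then show ?case by (simp add: tequiv_def strpoly_def)
next
  case (Cons a w)
  obtain g1 g0 where g: "str_val p q w = (g1, g0)" by (cases "str_val p q w")
  from Cons obtain k where k: "Poly w - [:g0, g1:] = tpoly p q * k"
    by (auto simp: tequiv_def g dvd_def strpoly_def)
  have "Poly (a # w) - [:q * g1 + a, g0 - p * g1:]
      = pCons 0 (Poly w - [:g0, g1:]) + smult g1 (tpoly p q)"
    by (simp add: tpoly_def algebra_simps)
  also have "\<dots> = tpoly p q * (pCons 0 k + [:g1:])"
    by (simp add: k algebra_simps)
  finally have "tpoly p q dvd Poly (a # w) - [:q * g1 + a, g0 - p * g1:]" ..
  then show ?case by (simp add: tequiv_def strpoly_def g mult_x_def)
qed

lemma tpoly_dvd_linear_iff: "tpoly p q dvd [:c, d:] \<longleftrightarrow> c = 0 \<and> d = 0"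
proof
  assume dvd: "tpoly p q dvd [:c, d:]"
  show "c = 0 \<and> d = 0"
  proof (rule ccontr)
    assume "\<not> (c = 0 \<and> d = 0)"
    then have "degree (tpoly p q) \<le> degree [:c, d:]"
      using dvd by (intro dvd_imp_degree_le) auto
    then show False by (simp add: tpoly_def split: if_splits)
  qed
qed simp

lemma tequiv_str_val_iff: "tequiv p q (strpoly w) [:b, a:] \<longleftrightarrow> str_val p q w = (a, b)"
proof -
  obtain a' b' where v: "str_val p q w = (a', b')" by (cases "str_val p q w")
  have "tpoly p q dvd strpoly w - [:b', a':]"
    using tequiv_str_val[of p q w] by (simp add: tequiv_def v)
  moreover have "strpoly w - [:b, a:] = (strpoly w - [:b', a':]) + [:b' - b, a' - a:]"
    by simp
  ultimately have "tequiv p q (strpoly w) [:b, a:] \<longleftrightarrow> tpoly p q dvd [:b' - b, a' - a:]"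
    unfolding tequiv_def by (simp only: dvd_add_right_iff)
  then show ?thesis by (auto simp: tpoly_dvd_linear_iff v)
qed

lemma psi_eq_str_val: "psi p q w = str_val p q w"
  unfolding psi_def tequiv_str_val_iff by simp

lemma str_equiv_iff: "str_equiv p q v w \<longleftrightarrow> str_val p q v = str_val p q w"
proof -
  let ?L = "\<lambda>h. [:snd h, fst h:]"
  have "tpoly p q dvd strpoly w - ?L (str_val p q w)"
    using tequiv_str_val by (simp add: tequiv_def)
  moreover have "strpoly v - ?L (str_val p q w) =
      (strpoly v - strpoly w) + (strpoly w - ?L (str_val p q w))"
    by simp
  ultimately have "str_equiv p q v w \<longleftrightarrow> tequiv p q (strpoly v) (?L (str_val p q w))"
    unfolding str_equiv_def tequiv_def by (simp only: dvd_add_left_iff)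
  then show ?thesis by (simp add: tequiv_str_val_iff)
qed

text \<open>The extra unit for \<open>snd h = 0\<close> pays for the expansion step from \<open>(h1, 0)\<close> to
  \<open>(0, h1)\<close>, which does not shrink the coordinates.\<close>

definition expansion_weight :: "int \<times> int \<Rightarrow> nat" where
  "expansion_weight h = nat (2 * (\<bar>fst h\<bar> + \<bar>snd h\<bar>) + of_bool (snd h = 0))"

lemma abs_mult_sdiv_le: "\<bar>b\<bar> * \<bar>a sdiv b\<bar> \<le> \<bar>a\<bar>" for a b :: int
proof -
  have "\<bar>a sdiv b\<bar> \<le> \<bar>a\<bar> div \<bar>b\<bar>"
    by (simp add: signed_divide_int_def abs_mult abs_sgn_eq pos_imp_zdiv_nonneg_iff)
  then have "\<bar>b\<bar> * \<bar>a sdiv b\<bar> \<le> \<bar>b\<bar> * (\<bar>a\<bar> div \<bar>b\<bar>)"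
    by (simp add: mult_left_mono)
  also have "\<dots> \<le> \<bar>a\<bar>"
    by (cases "b = 0") (simp_all add: minus_mod_eq_mult_div[symmetric])
  finally show ?thesis .
qed

lemma digit_expansion_step:
  assumes pq: "1 + \<bar>p\<bar> < \<bar>q\<bar>" and h: "h \<noteq> 0"
  obtains g a where "a \<in> digits q" "mult_x p q g + (0, a) = h"
    "expansion_weight g < expansion_weight h"
proof -
  obtain h1 h2 where h12: "h = (h1, h2)" by (cases h)
  \<comment> \<open>Division rounding towards zero gives \<open>|g1| \<le> |h2| / |q|\<close>.\<close>
  define g1 where "g1 = h2 sdiv q"
  define g0 where "g0 = h1 + p * g1"
  have q0: "q \<noteq> 0" using pq by auto
  have digit: "h2 smod q \<in> digits q"
    using smod_int_range[OF q0, of h2] by (simp add: digits_def)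
  have expansion: "mult_x p q (g1, g0) + (0, h2 smod q) = h"
    using mult_sdiv_smod_eq[of q h2] by (simp add: mult_x_def h12 g0_def g1_def)
  have "expansion_weight (g1, g0) < expansion_weight (h1, h2)"
  proof (cases "g1 = 0")
    case True
    then have "g0 = h1" by (simp add: g0_def)
    moreover have "(h1, h2) \<noteq> (0, 0)" using h h12 by (simp add: zero_prod_def)
    ultimately show ?thesis
      unfolding expansion_weight_def True by (cases "h2 = 0") auto
  next
    case False
    have "\<bar>g0\<bar> \<le> \<bar>h1\<bar> + \<bar>p\<bar> * \<bar>g1\<bar>"
      unfolding g0_def by (metis abs_mult abs_triangle_ineq)
    moreover have "\<bar>g1\<bar> + \<bar>p\<bar> * \<bar>g1\<bar> < \<bar>q\<bar> * \<bar>g1\<bar>"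
      using mult_strict_right_mono[OF pq, of "\<bar>g1\<bar>"] False by (simp add: distrib_right)
    moreover have "\<bar>q\<bar> * \<bar>g1\<bar> \<le> \<bar>h2\<bar>"
      unfolding g1_def by (rule abs_mult_sdiv_le)
    ultimately have "\<bar>g1\<bar> + \<bar>g0\<bar> < \<bar>h1\<bar> + \<bar>h2\<bar>" by linarith
    then show ?thesis
      unfolding expansion_weight_def fst_conv snd_conv using nat_less_eq_zless by force
  qed
  with digit expansion show ?thesis using that unfolding h12 by blast
qed

lemma str_val_surj:
  assumes "1 + \<bar>p\<bar> < \<bar>q\<bar>"
  shows "\<exists>w \<in> lists (digits q). str_val p q w = h"
proof (induction h rule: measure_induct_rule[where f = expansion_weight])
  case (less h)
  show ?case
  proof (cases "h = 0")
    case True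
    then show ?thesis by (intro bexI[of _ "[]"]) auto
  next
    case False
    then obtain g a where "a \<in> digits q" "mult_x p q g + (0, a) = h"
      "expansion_weight g < expansion_weight h"
      using digit_expansion_step[OF assms] by blast
    moreover from this less obtain w where "w \<in> lists (digits q)" "str_val p q w = g"
      by blast
    ultimately show ?thesis by (intro bexI[of _ "a # w"]) auto
  qed
qed

lemma llex_less_iff_lenlex: "llex_less v w \<longleftrightarrow> (v, w) \<in> lenlex {(a, b). a < b}"
  by (auto simp: llex_less_def lenlex_conv lexord_lex)

lemma asymp_on_llex_less: "asymp_on A llex_less"
proof -
  have "asym (lenlex {(a :: int, b). a < b})"
    by (rule asym_lenlex) auto
  then show ?thesis unfolding asymp_on_def llex_less_iff_lenlex by (meson asymD)
qed

lemma transp_on_llex_less: "transp_on A llex_less"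
proof -
  have "trans (lenlex {(a :: int, b). a < b})"
    by (rule lenlex_transI) (auto intro: transI)
  then show ?thesis unfolding transp_on_def llex_less_iff_lenlex by (meson transD)
qed

lemma Dom_str_val_inj:
  assumes "v \<in> Dom p q" "w \<in> Dom p q" "str_val p q v = str_val p q w"
  shows "v = w"
proof (rule ccontr)
  assume "v \<noteq> w"
  moreover have "total (lenlex {(a :: int, b). a < b})"
    by (rule total_lenlex) (auto simp: total_on_def)
  ultimately have "llex_less v w \<or> llex_less w v"
    by (auto simp: llex_less_iff_lenlex total_on_def)
  then show False
    using assms by (auto simp: Dom_def str_equiv_iff)
qed

lemma Dom_str_val_surj:
  assumes "1 + \<bar>p\<bar> < \<bar>q\<bar>"
  shows "\<exists>w \<in> Dom p q. str_val p q w = h"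
proof -
  obtain w0 where w0: "w0 \<in> lists (digits q)" "str_val p q w0 = h"
    using str_val_surj[OF assms] by blast
  define S where "S = {v \<in> lists (digits q). length v \<le> length w0}"
  have "finite S"
    unfolding S_def by (rule finite_subset[OF _ finite_lists_length_le[of "digits q"]])
      (auto simp: digits_def)
  moreover have "\<exists>v \<in> S. str_val p q v = h" using w0 by (auto simp: S_def)
  ultimately have "\<exists>m \<in> S. str_val p q m = h \<and> (\<forall>v \<in> S. llex_less v m \<longrightarrow> str_val p q v \<noteq> h)"
    by (rule Finite_Set.bex_min_element_with_property[OF _ asymp_on_llex_less transp_on_llex_less])
  then obtain m where m: "m \<in> S" "str_val p q m = h"
    and minimal: "\<And>v. v \<in> S \<Longrightarrow> llex_less v m \<Longrightarrow> str_val p q v \<noteq> h"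
    by blast
  have "m \<in> Dom p q"
    unfolding Dom_def
  proof (intro CollectI conjI notI)
    show "m \<in> lists (digits q)" using m by (simp add: S_def)
    assume "\<exists>v \<in> lists (digits q). llex_less v m \<and> str_equiv p q v m"
    then obtain v where v: "v \<in> lists (digits q)" "llex_less v m" "str_equiv p q v m"
      by blast
    then have "v \<in> S"
      using m by (auto simp: S_def llex_less_def)
    with v m minimal show False by (simp add: str_equiv_iff)
  qed
  with m show ?thesis by blast
qed

lemma str_val_pump_diff:
  "str_val p q (u @ v @ v @ z) - str_val p q (u @ v @ z) =
     (mult_x p q ^^ length v) (str_val p q (u @ v @ z) - str_val p q (u @ z))"
proof -
  have "str_val p q (u @ v @ v @ z) - str_val p q (u @ v @ z) =
      (mult_x p q ^^ length u) (str_val p q (v @ v @ z) - str_val p q (v @ z))"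
    by (rule str_val_append_diff)
  also have "str_val p q (v @ v @ z) - str_val p q (v @ z) =
      (mult_x p q ^^ length v) (str_val p q (v @ z) - str_val p q z)"
    by (rule str_val_append_diff)
  also have "(mult_x p q ^^ length u) ((mult_x p q ^^ length v) (str_val p q (v @ z) - str_val p q z)) =
      (mult_x p q ^^ length v) ((mult_x p q ^^ length u) (str_val p q (v @ z) - str_val p q z))"
    by (metis add.commute comp_apply funpow_add)
  also have "(mult_x p q ^^ length u) (str_val p q (v @ z) - str_val p q z) =
      str_val p q (u @ v @ z) - str_val p q (u @ z)"
    by (rule str_val_append_diff[symmetric])
  finally show ?thesis .
qed

text \<open>Since \<open>(0, 1)\<close> represents \<open>1\<close>, the pair \<open>(c1, c0)\<close> below holds the coefficients of
  \<open>x ^ m \<equiv> c1 x + c0\<close> modulo \<open>t\<close>.\<close>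

lemma mult_x_pow_eq:
  assumes "(mult_x p q ^^ m) (0, 1) = (c1, c0)"
  shows "(mult_x p q ^^ m) h =
    (c1 * fst (mult_x p q h) + c0 * fst h, c1 * snd (mult_x p q h) + c0 * snd h)"
  using assms
proof (induction m arbitrary: c1 c0)
  case 0
  then show ?case by simp
next
  case (Suc m)
  obtain d1 d0 where d: "(mult_x p q ^^ m) (0, 1) = (d1, d0)"
    by (cases "(mult_x p q ^^ m) (0, 1)")
  have "(c1, c0) = mult_x p q (d1, d0)" using Suc.prems d by simp
  then have c: "c1 = d0 - p * d1" "c0 = q * d1" by (simp_all add: mult_x_def)
  have "(mult_x p q ^^ Suc m) h = mult_x p q ((mult_x p q ^^ m) h)" by simp
  also have "\<dots> = mult_x p q
      (d1 * fst (mult_x p q h) + d0 * fst h, d1 * snd (mult_x p q h) + d0 * snd h)"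
    by (simp only: Suc.IH[OF d])
  also have "\<dots> = (c1 * fst (mult_x p q h) + c0 * fst h, c1 * snd (mult_x p q h) + c0 * snd h)"
    by (simp add: mult_x_def c algebra_simps)
  finally show ?case .
qed

lemma mult_x_pow_mod_q:
  assumes "(mult_x p q ^^ Suc n) (0, 1) = (c1, c0)"
  shows "q dvd c1 - (- p) ^ n \<and> q dvd c0"
  using assms
proof (induction n arbitrary: c1 c0)
  case 0
  then show ?case by (simp add: mult_x_def)
next
  case (Suc n)
  obtain d1 d0 where d: "(mult_x p q ^^ Suc n) (0, 1) = (d1, d0)"
    by (cases "(mult_x p q ^^ Suc n) (0, 1)")
  have "(c1, c0) = mult_x p q (d1, d0)" using Suc.prems d by simp
  then have c: "c1 = d0 - p * d1" "c0 = q * d1" by (simp_all add: mult_x_def)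
  have "c1 - (- p) ^ Suc n = d0 + (- p) * (d1 - (- p) ^ n)"
    by (simp add: c algebra_simps)
  moreover have "q dvd d0 + (- p) * (d1 - (- p) ^ n)"
    using Suc.IH[OF d] by (blast intro: dvd_add dvd_mult)
  ultimately have "q dvd c1 - (- p) ^ Suc n" by (simp only:)
  then show ?case by (simp add: c)
qed

lemma irreducible_tpoly_no_root:
  assumes "irreducible (tpoly p q)"
  shows "poly (tpoly p q) a \<noteq> 0"
proof
  assume "poly (tpoly p q) a = 0"
  then have "[:- a, 1:] dvd tpoly p q" by (simp add: poly_eq_0_iff_dvd)
  then have "tpoly p q dvd [:- a, 1:] \<or> is_unit [:- a, 1:]"
    by (rule irreducibleD'[OF assms])
  then show False
    using dvd_imp_degree_le[of "tpoly p q" "[:- a, 1:]"] dvd_imp_degree_le[of "[:- a, 1:]" 1]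
    by (auto simp: tpoly_def)
qed

text \<open>A nontrivial zero of this norm form would give a rational root \<open>- r2 / r1\<close> of the
  monic polynomial \<open>t\<close>, which would then have to be an integer.\<close>

lemma irreducible_tpoly_norm_form:
  assumes irr: "irreducible (tpoly p q)"
    and zero: "r2^2 - p * r1 * r2 - q * r1^2 = (0::int)"
  shows "r1 = 0 \<and> r2 = 0"
proof (cases "r1 = 0")
  case True
  then show ?thesis using zero by simp
next
  case False
  define g where "g = gcd r1 r2"
  define s1 where "s1 = r1 div g"
  define s2 where "s2 = r2 div g"
  have "g \<noteq> 0" using False by (simp add: g_def)
  have r: "r1 = g * s1" "r2 = g * s2" by (simp_all add: s1_def s2_def g_def)
  have "coprime s1 s2"
    unfolding s1_def s2_def g_def using div_gcd_coprime False by blast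
  have "g^2 * (s2^2 - s1 * (p * s2 + q * s1)) = 0"
    using zero unfolding r by (simp add: algebra_simps power2_eq_square)
  then have s2_sq: "s2^2 = s1 * (p * s2 + q * s1)" using \<open>g \<noteq> 0\<close> by simp
  then have "s1 dvd s2^2" by simp
  moreover have "coprime s1 (s2^2)" using \<open>coprime s1 s2\<close> by simp
  ultimately have "is_unit s1" by (metis coprime_common_divisor dvd_refl)
  then have "\<bar>s1\<bar> = 1" by simp
  then have s1_sq: "s1 * s1 = 1" using abs_mult_self_eq[of s1] by simp
  have "poly (tpoly p q) (- (s2 * s1)) = s1 * s1 * (s2^2 - s1 * (p * s2 + q * s1))"
    using s1_sq by (simp add: tpoly_def algebra_simps power2_eq_square)
  then have "poly (tpoly p q) (- (s2 * s1)) = 0" using s2_sq by simp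
  with irreducible_tpoly_no_root[OF irr] show ?thesis by blast
qed

lemma mult_x_independent:
  assumes irr: "irreducible (tpoly p q)" and R: "R \<noteq> 0"
    and fst_eq: "\<alpha> * fst (mult_x p q R) + \<beta> * fst R = 0"
    and snd_eq: "\<alpha> * snd (mult_x p q R) + \<beta> * snd R = 0"
  shows "\<alpha> = 0"
proof -
  obtain r1 r2 where Rr: "R = (r1, r2)" by (cases R)
  have "\<alpha> * (r2^2 - p * r1 * r2 - q * r1^2)
      = r2 * (\<alpha> * (r2 - p * r1) + \<beta> * r1) - r1 * (\<alpha> * (q * r1) + \<beta> * r2)"
    by (simp add: algebra_simps power2_eq_square)
  also have "\<dots> = 0" using fst_eq snd_eq by (simp add: Rr mult_x_def)
  finally show ?thesis
    using irreducible_tpoly_norm_form[OF irr, of r2 r1] R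
    by (auto simp: Rr zero_prod_def)
qed

lemma mult_x_pow_no_eigenvector:
  assumes cop: "coprime p q" and q: "\<not> is_unit q" and irr: "irreducible (tpoly p q)"
    and R: "R \<noteq> 0" and m: "0 < m" and a: "a \<noteq> 0"
    and fst_eq: "a * fst ((mult_x p q ^^ m) R) = b * fst R"
    and snd_eq: "a * snd ((mult_x p q ^^ m) R) = b * snd R"
  shows False
proof -
  obtain n where n: "m = Suc n" using m by (cases m) auto
  obtain c1 c0 where c: "(mult_x p q ^^ m) (0, 1) = (c1, c0)"
    by (cases "(mult_x p q ^^ m) (0, 1)")
  note x_pow = mult_x_pow_eq[OF c, of R]
  have "(a * c1) * fst (mult_x p q R) + (a * c0 - b) * fst R = 0"
    using fst_eq unfolding x_pow by (simp add: algebra_simps)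
  moreover have "(a * c1) * snd (mult_x p q R) + (a * c0 - b) * snd R = 0"
    using snd_eq unfolding x_pow by (simp add: algebra_simps)
  ultimately have "a * c1 = 0" by (rule mult_x_independent[OF irr R])
  with a have "c1 = 0" by simp
  with mult_x_pow_mod_q[OF c[unfolded n]] have "q dvd (- p) ^ n" by simp
  moreover have "coprime q ((- p) ^ n)" using cop by (simp add: coprime_commute)
  ultimately show False
    using q coprime_common_divisor[of q "(- p) ^ n" q] by simp
qed

lemma cyclic_subgroup_diff:
  assumes "x \<in> cyclic_subgroup \<gamma>" "y \<in> cyclic_subgroup \<gamma>"
  shows "x - y \<in> cyclic_subgroup \<gamma>"
proof -
  from assms obtain k l where "x = (k * fst \<gamma>, k * snd \<gamma>)" "y = (l * fst \<gamma>, l * snd \<gamma>)"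
    by (auto simp: cyclic_subgroup_def)
  then have "x - y = ((k - l) * fst \<gamma>, (k - l) * snd \<gamma>)" by (simp add: algebra_simps)
  then show ?thesis by (auto simp: cyclic_subgroup_def)
qed

lemma infinite_cyclic_subgroup:
  assumes "\<gamma> \<noteq> (0, 0)"
  shows "infinite (cyclic_subgroup \<gamma>)"
proof -
  have "cyclic_subgroup \<gamma> = range (\<lambda>k. (k * fst \<gamma>, k * snd \<gamma>))"
    by (auto simp: cyclic_subgroup_def)
  moreover have "inj (\<lambda>k. (k * fst \<gamma>, k * snd \<gamma>))"
    using assms by (cases \<gamma>) (auto intro!: injI)
  ultimately show ?thesis
    using finite_imageD infinite_UNIV_int by metis
qed

lemma mult_x_pow_not_in_cyclic_subgroup:
  assumes "coprime p q" "\<not> is_unit q" "irreducible (tpoly p q)"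
    and R: "R \<noteq> 0" "R \<in> cyclic_subgroup \<gamma>" and "0 < m"
  shows "(mult_x p q ^^ m) R \<notin> cyclic_subgroup \<gamma>"
proof
  assume "(mult_x p q ^^ m) R \<in> cyclic_subgroup \<gamma>"
  moreover obtain a where a: "R = (a * fst \<gamma>, a * snd \<gamma>)"
    using R by (auto simp: cyclic_subgroup_def)
  ultimately obtain b where b: "(mult_x p q ^^ m) R = (b * fst \<gamma>, b * snd \<gamma>)"
    by (auto simp: cyclic_subgroup_def)
  have "a \<noteq> 0" using R a by (auto simp: zero_prod_def)
  moreover have "a * fst ((mult_x p q ^^ m) R) = b * fst R"
    "a * snd ((mult_x p q ^^ m) R) = b * snd R"
    unfolding b by (simp_all add: a)
  ultimately show False
    by (rule mult_x_pow_no_eigenvector[OF assms(1-3) R(1) \<open>0 < m\<close>])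
qed

lemma foldl_in_states:
  assumes "\<forall>x \<in> Q. \<forall>a \<in> A. \<delta> x a \<in> Q" "x \<in> Q" "w \<in> lists A"
  shows "foldl \<delta> x w \<in> Q"
  using assms(2,3) by (induction w arbitrary: x) (use assms(1) in auto)

lemma foldl_concat_replicate_loop:
  "foldl \<delta> x v = x \<Longrightarrow> foldl \<delta> x (concat (replicate k v)) = x"
  by (induction k) auto

lemma automaton_run_loops:
  assumes fin: "finite Q" and s: "s \<in> Q" and closed: "\<forall>x \<in> Q. \<forall>a \<in> A. \<delta> x a \<in> Q"
    and w: "w \<in> lists A" "card Q \<le> length w"
  obtains u v z where "w = u @ v @ z" "v \<noteq> []" "foldl \<delta> (foldl \<delta> s u) v = foldl \<delta> s u"
proof -
  define st where "st i = foldl \<delta> s (take i w)" for i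
  have "st ` {0..card Q} \<subseteq> Q"
    using foldl_in_states[OF closed s] w(1) by (auto simp: st_def dest: in_set_takeD)
  then have "\<not> inj_on st {0..card Q}"
    using card_inj_on_le[OF _ _ fin] by fastforce
  then obtain i j where ij: "i < j" "j \<le> card Q" "st i = st j"
    unfolding inj_on_def by (metis atLeastAtMost_iff linorder_neqE_nat)
  have take_j: "take j w = take i w @ drop i (take j w)"
    using ij(1) by (metis append_take_drop_id less_imp_le min.absorb1 take_take)
  show thesis
  proof
    show "w = take i w @ drop i (take j w) @ drop j w"
      by (metis append.assoc append_take_drop_id take_j)
    show "drop i (take j w) \<noteq> []" using ij w(2) by simp
    show "foldl \<delta> (foldl \<delta> s (take i w)) (drop i (take j w)) = foldl \<delta> s (take i w)"
      using ij(3) unfolding st_def by (subst (asm) take_j) simp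
  qed
qed

lemma regular_lang_pumping:
  assumes "regular_lang A L" "finite A" "infinite L"
  obtains u v z where "v \<noteq> []" "\<And>k. u @ concat (replicate k v) @ z \<in> L"
proof -
  obtain Q :: "nat set" and s F \<delta> where fin: "finite Q" and s: "s \<in> Q"
    and closed: "\<forall>x \<in> Q. \<forall>a \<in> A. \<delta> x a \<in> Q" and L: "L = {w \<in> lists A. foldl \<delta> s w \<in> F}"
    using assms(1) unfolding regular_lang_def by blast
  have "\<not> L \<subseteq> {w. set w \<subseteq> A \<and> length w \<le> card Q}"
    using assms(3) finite_subset[OF _ finite_lists_length_le[OF assms(2)]] by blast
  then obtain w where w: "w \<in> L" "\<not> (set w \<subseteq> A \<and> length w \<le> card Q)"
    by blast
  then have "w \<in> lists A" using L by blast
  with w have "card Q \<le> length w" by auto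
  with automaton_run_loops[OF fin s closed \<open>w \<in> lists A\<close>] obtain u v z where
    uvz: "w = u @ v @ z" "v \<noteq> []" and loop: "foldl \<delta> (foldl \<delta> s u) v = foldl \<delta> s u"
    by blast
  show thesis
  proof (rule that[OF uvz(2)])
    fix k
    have "foldl \<delta> s (u @ concat (replicate k v) @ z) = foldl \<delta> s w"
      by (simp add: uvz foldl_concat_replicate_loop[OF loop] loop)
    moreover have "u @ concat (replicate k v) @ z \<in> lists A"
      using \<open>w \<in> lists A\<close> uvz by auto
    ultimately show "u @ concat (replicate k v) @ z \<in> L" using w(1) unfolding L by auto
  qed
qed

lemma psi_image_Dom:
  assumes "1 + \<bar>p\<bar> < \<bar>q\<bar>"
  shows "psi p q ` {w \<in> Dom p q. psi p q w \<in> S} = S"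
proof
  show "S \<subseteq> psi p q ` {w \<in> Dom p q. psi p q w \<in> S}"
  proof
    fix h assume "h \<in> S"
    moreover obtain w where "w \<in> Dom p q" "str_val p q w = h"
      using Dom_str_val_surj[OF assms] by blast
    ultimately show "h \<in> psi p q ` {w \<in> Dom p q. psi p q w \<in> S}"
      by (auto simp: psi_eq_str_val)
  qed
qed auto

lemma Dom_pumping_leaves_cyclic_subgroup:
  assumes "coprime p q" "\<not> is_unit q" "irreducible (tpoly p q)" "v \<noteq> []"
    and Dom: "\<And>k. u @ concat (replicate k v) @ z \<in> Dom p q"
    and val: "\<And>k. str_val p q (u @ concat (replicate k v) @ z) \<in> cyclic_subgroup \<gamma>"
  shows False
proof -
  let ?val = "\<lambda>k. str_val p q (u @ concat (replicate k v) @ z)"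
  define R where "R = ?val 1 - ?val 0"
  have "R \<noteq> 0"
  proof
    assume "R = 0"
    then have "u @ concat (replicate 1 v) @ z = u @ concat (replicate 0 v) @ z"
      using Dom[of 0] Dom[of 1] by (intro Dom_str_val_inj) (auto simp: R_def)
    with \<open>v \<noteq> []\<close> show False by simp
  qed
  moreover have "R \<in> cyclic_subgroup \<gamma>"
    unfolding R_def by (rule cyclic_subgroup_diff[OF val val])
  ultimately have "(mult_x p q ^^ length v) R \<notin> cyclic_subgroup \<gamma>"
    using mult_x_pow_not_in_cyclic_subgroup assms(1-4) by blast
  moreover have "(mult_x p q ^^ length v) R = ?val 2 - ?val 1"
    by (simp add: R_def str_val_pump_diff numeral_2_eq_2)
  ultimately show False
    using cyclic_subgroup_diff[OF val[of 2] val[of 1]] by simp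
qed

theorem mainTheorem7:
  fixes p q :: int and \<gamma> :: "int \<times> int"
  assumes "1 + \<bar>p\<bar> < \<bar>q\<bar>"
    and "gcd p q = 1"
    and "irreducible (tpoly p q)"
    and "\<gamma> \<noteq> (0, 0)"
  shows "\<not> regular_lang (digits q) {w \<in> Dom p q. psi p q w \<in> cyclic_subgroup \<gamma>}"
    (is "\<not> regular_lang ?A ?L")
proof
  assume "regular_lang ?A ?L"
  moreover have "finite ?A" by (simp add: digits_def)
  moreover have "infinite ?L"
    using finite_imageI[of ?L "psi p q"] psi_image_Dom[OF assms(1)]
      infinite_cyclic_subgroup[OF assms(4)] by auto
  ultimately obtain u v z where "v \<noteq> []" and pump: "\<And>k. u @ concat (replicate k v) @ z \<in> ?L"
    by (rule regular_lang_pumping) blast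
  moreover have "coprime p q" "\<not> is_unit q"
    using assms(1,2) by (auto simp: coprime_iff_gcd_eq_1)
  ultimately show False
    using Dom_pumping_leaves_cyclic_subgroup[OF _ _ assms(3), of v u z \<gamma>]
    by (simp add: psi_eq_str_val)
qed

end
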